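(* Let $\mathcal{G}$ be the complete quadrilateral, let $R$ be a commutative ring with $2=0$ and let $A=M_R(\mathcal{G},1)$ (a free $R$-module of rank $6$). For each of the $4$ lines $\ell$ of $\mathcal{G}$, let $A^\ell_0$ and $A^\ell_1$ be the eigenspaces of $\operatorname{ad}_\ell$ for the eigenvalues $0$ and $1$. Then for each line $\ell$, $A=A^\ell_0\oplus A^\ell_1$ and \[ A^\ell_0A^\ell_0\subseteq A^\ell_0,\quad A^\ell_0A^\ell_1\subseteq A^\ell_1,\quad A^\ell_1A^\ell_1=0 , \] i.e. $A$ is a decomposition algebra with fusion law $0*0=\{0\}$, $0*1=1*0=\{1\}$, $1*1=\emptyset$. Moreover, the subspaces $A^\ell_1$ coincide for all $4$ choices of $\ell$.
   Context: The complete quadrilateral is the partial linear space with $6$ points $a,b,c,x,y,z$ and $4$ lines $\{a,b,c\}$, $\{a,y,z\}$, $\{b,x,z\}$, $\{c,x,y\}$ (the Fischer space of $\mathrm{Sym}(4)$ with its transpositions). For distinct collinear points $p,q$ (written $p\sim q$), $p\wedge q$ denotes the third point of their line. The nilpotent Matsuo algebra $A=M_R(\mathcal{G},1)$ is the free $R$-module with basis the points and commutative bilinear product $p\cdot q=0$ if $p=q$ or $p\not\sim q$, and $p\cdot q=p+q+p\wedge q$ if $p\sim q$. For a line $\ell$, we also write $\ell$ for the sum of its three points in $A$, and $\operatorname{ad}_\ell(v)=\ell v$; the eigenspace for $\lambda$ is $\{v:\ell v=\lambda v\}$. *)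

theory Defs
  imports Main "HOL-Library.Function_Algebras"
begin

datatype pt = Pa | Pb | Pc | Px | Py | Pz

instance pt :: finite
proof
  have "(UNIV :: pt set) = {Pa, Pb, Pc, Px, Py, Pz}"
    by (auto intro: pt.exhaust)
  then show "finite (UNIV :: pt set)" by (metis finite.emptyI finite_insert)
qed

definition lines :: "pt set set" where
  "lines = {{Pa, Pb, Pc}, {Pa, Py, Pz}, {Pb, Px, Pz}, {Pc, Px, Py}}"

definition collinear :: "pt \<Rightarrow> pt \<Rightarrow> bool" where
  "collinear p q \<longleftrightarrow> p \<noteq> q \<and> (\<exists>l\<in>lines. p \<in> l \<and> q \<in> l)"

definition wedge :: "pt \<Rightarrow> pt \<Rightarrow> pt" where
  "wedge p q = (THE r. r \<noteq> p \<and> r \<noteq> q \<and> {p, q, r} \<in> lines)"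

text \<open>Elements of A = M_R(G,1): R-valued coordinate functions on the basis of points.\<close>
type_synonym 'r alg = "pt \<Rightarrow> 'r"

definition bprod :: "pt \<Rightarrow> pt \<Rightarrow> 'r::comm_ring_1 alg" where
  "bprod p q = (if collinear p q
                then (\<lambda>r. if r \<in> {p, q, wedge p q} then 1 else 0)
                else (\<lambda>r. 0))"

definition amult :: "'r::comm_ring_1 alg \<Rightarrow> 'r alg \<Rightarrow> 'r alg" where
  "amult u v = (\<lambda>r. \<Sum>p\<in>UNIV. \<Sum>q\<in>UNIV. u p * v q * bprod p q r)"

text \<open>A line viewed as the sum of its three points.\<close>
definition lvec :: "pt set \<Rightarrow> 'r::comm_ring_1 alg" where
  "lvec l = (\<lambda>r. if r \<in> l then 1 else 0)"

definition eigsp :: "pt set \<Rightarrow> 'r::comm_ring_1 \<Rightarrow> 'r alg set" where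
  "eigsp l lam = {v. amult (lvec l) v = (\<lambda>r. lam * v r)}"

end

theory Submission
  imports Defs
begin

(*
  Let 2 = 0 in R and let l be a line. Multiplication by l is then a derivation of A; it maps A
  into the subspace J spanned by the products l p with p not on l, and fixes J pointwise, where
  J is the same for all lines and J J = 0. So ad_l is idempotent and A is the direct sum of its
  kernel A_0 and its image A_1 = J. The Leibniz rule l (u w) = (l u) w + u (l w) gives
  A_0 A_0 <= A_0 and A_0 A_1 <= A_1, and A_1 A_1 = J J = 0.
*)

lemma UNIV_pt: "(UNIV :: pt set) = {Pa, Pb, Pc, Px, Py, Pz}"
  by (auto intro: pt.exhaust)

lemma all_pt: "(\<forall>r. P r) \<longleftrightarrow> P Pa \<and> P Pb \<and> P Pc \<and> P Px \<and> P Py \<and> P Pz"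
  by (metis pt.exhaust)

lemma lines_unique:
  assumes "l \<in> lines" "l' \<in> lines" "p \<in> l \<inter> l'" "q \<in> l \<inter> l'" "p \<noteq> q"
  shows "l = l'"
  using assms unfolding lines_def by auto

lemma line_through_two:
  assumes "l \<in> lines" "p \<in> l" "q \<in> l" "p \<noteq> q"
  shows "\<exists>s. l = {p, q, s} \<and> s \<noteq> p \<and> s \<noteq> q"
  using assms(1) unfolding lines_def
  by (elim insertE emptyE; use assms(2-4) in \<open>simp; blast\<close>)

lemma wedge_eq:
  assumes "{p, q, r} \<in> lines" "p \<noteq> q" "r \<noteq> p" "r \<noteq> q"
  shows "wedge p q = r"
  unfolding wedge_def
proof (rule the_equality)
  show "r \<noteq> p \<and> r \<noteq> q \<and> {p, q, r} \<in> lines"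
    using assms by blast
next
  fix r' assume r': "r' \<noteq> p \<and> r' \<noteq> q \<and> {p, q, r'} \<in> lines"
  then have "{p, q, r'} = {p, q, r}"
    using lines_unique[OF _ assms(1), of _ p q] assms(2) by blast
  with r' show "r' = r" by blast
qed

lemma bprod_eq:
  "bprod p q r = (if p \<noteq> q \<and> (\<exists>l\<in>lines. {p, q, r} \<subseteq> l) then 1 else 0)"
proof (cases "collinear p q")
  case True
  then obtain l where l: "l \<in> lines" "p \<in> l" "q \<in> l" and "p \<noteq> q"
    unfolding collinear_def by blast
  obtain s where s: "l = {p, q, s}" "s \<noteq> p" "s \<noteq> q"
    using line_through_two[OF l \<open>p \<noteq> q\<close>] by blast
  have "wedge p q = s"
    using wedge_eq[of p q s] l(1) s \<open>p \<noteq> q\<close> by simp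
  with True s(1) have "bprod p q r = (if r \<in> l then 1 else 0)"
    by (simp add: bprod_def)
  moreover have "r \<in> l \<longleftrightarrow> (\<exists>l'\<in>lines. {p, q, r} \<subseteq> l')"
    using l lines_unique[OF l(1) _ _ _ \<open>p \<noteq> q\<close>] by blast
  ultimately show ?thesis
    using \<open>p \<noteq> q\<close> by simp
next
  case False
  then show ?thesis
    unfolding bprod_def collinear_def by auto
qed

lemma amult_Pa [simp]:
  "amult u v Pa =
    u Pa * v Pb + u Pa * v Pc + u Pb * v Pa + u Pb * v Pc + u Pc * v Pa + u Pc * v Pb
    + u Pa * v Py + u Pa * v Pz + u Py * v Pa + u Py * v Pz + u Pz * v Pa + u Pz * v Py"
  by (simp add: amult_def UNIV_pt bprod_eq lines_def add_ac)

lemma amult_Pb [simp]: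
  "amult u v Pb =
    u Pa * v Pb + u Pa * v Pc + u Pb * v Pa + u Pb * v Pc + u Pc * v Pa + u Pc * v Pb
    + u Pb * v Px + u Pb * v Pz + u Px * v Pb + u Px * v Pz + u Pz * v Pb + u Pz * v Px"
  by (simp add: amult_def UNIV_pt bprod_eq lines_def add_ac)

lemma amult_Pc [simp]:
  "amult u v Pc =
    u Pa * v Pb + u Pa * v Pc + u Pb * v Pa + u Pb * v Pc + u Pc * v Pa + u Pc * v Pb
    + u Pc * v Px + u Pc * v Py + u Px * v Pc + u Px * v Py + u Py * v Pc + u Py * v Px"
  by (simp add: amult_def UNIV_pt bprod_eq lines_def add_ac)

lemma amult_Px [simp]:
  "amult u v Px =
    u Pb * v Px + u Pb * v Pz + u Px * v Pb + u Px * v Pz + u Pz * v Pb + u Pz * v Px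
    + u Pc * v Px + u Pc * v Py + u Px * v Pc + u Px * v Py + u Py * v Pc + u Py * v Px"
  by (simp add: amult_def UNIV_pt bprod_eq lines_def add_ac)

lemma amult_Py [simp]:
  "amult u v Py =
    u Pa * v Py + u Pa * v Pz + u Py * v Pa + u Py * v Pz + u Pz * v Pa + u Pz * v Py
    + u Pc * v Px + u Pc * v Py + u Px * v Pc + u Px * v Py + u Py * v Pc + u Py * v Px"
  by (simp add: amult_def UNIV_pt bprod_eq lines_def add_ac)

lemma amult_Pz [simp]:
  "amult u v Pz =
    u Pa * v Py + u Pa * v Pz + u Py * v Pa + u Py * v Pz + u Pz * v Pa + u Pz * v Py
    + u Pb * v Px + u Pb * v Pz + u Px * v Pb + u Px * v Pz + u Pz * v Pb + u Pz * v Px"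
  by (simp add: amult_def UNIV_pt bprod_eq lines_def add_ac)

lemma amult_add_right: "amult u (v + w) = amult u v + amult u w"
  by (simp add: amult_def fun_eq_iff distrib_left distrib_right sum.distrib)

lemma amult_zero_left [simp]: "amult 0 v = 0"
  by (simp add: amult_def fun_eq_iff)

lemma amult_zero_right [simp]: "amult u 0 = 0"
  by (simp add: amult_def fun_eq_iff)

lemma idempotent_decomposition:
  fixes f :: "'a::ab_group_add \<Rightarrow> 'a"
  assumes add: "\<And>x y. f (x + y) = f x + f y" and idem: "\<And>x. f (f x) = f x"
  shows "\<exists>!w. w \<in> {x. f x = 0} \<times> {x. f x = x} \<and> v = fst w + snd w"
proof (rule ex1I)
  have "f (v - f v) = 0"
    using add[of "v - f v" "f v"] idem by simp
  with idem show "(v - f v, f v) \<in> {x. f x = 0} \<times> {x. f x = x}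
      \<and> v = fst (v - f v, f v) + snd (v - f v, f v)"
    by simp
next
  fix w assume w: "w \<in> {x. f x = 0} \<times> {x. f x = x} \<and> v = fst w + snd w"
  then have "f v = snd w"
    using add[of "fst w" "snd w"] by auto
  with w show "w = (v - f v, f v)"
    by (auto simp: prod_eq_iff)
qed

lemma eigsp_zero: "eigsp l 0 = {v. amult (lvec l) v = 0}"
  by (simp add: eigsp_def zero_fun_def)

lemma eigsp_one: "eigsp l 1 = {v. amult (lvec l) v = v}"
  by (simp add: eigsp_def)

lemma char2_simps:
  assumes "(2::'a::comm_ring_1) = 0"
  shows "x + x = (0::'a)" and "x + (x + y) = (y::'a)" and "numeral (Num.Bit0 n) = (0::'a)"
proof -
  have add_self: "z + z = 0" for z :: 'a
    using assms by (metis mult_2 mult_zero_left)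
  show "x + x = 0" "x + (x + y) = y" "numeral (Num.Bit0 n) = (0::'a)"
    by (simp_all add: add_self numeral_Bit0 flip: add.assoc)
qed

(* Of the three points off l, one is r or the point not collinear with r; (l v) r is the sum of
   the coordinates of v at the other two. *)
lemma ad_line_simps:
  fixes v :: "'r::comm_ring_1 alg"
  assumes "(2::'r) = 0"
  shows "amult (lvec {Pa, Pb, Pc}) v = (\<lambda>r. case r of
      Pa \<Rightarrow> v Py + v Pz | Pb \<Rightarrow> v Px + v Pz | Pc \<Rightarrow> v Px + v Py
    | Px \<Rightarrow> v Py + v Pz | Py \<Rightarrow> v Px + v Pz | Pz \<Rightarrow> v Px + v Py)"
    and "amult (lvec {Pa, Py, Pz}) v = (\<lambda>r. case r of
      Pa \<Rightarrow> v Pb + v Pc | Pb \<Rightarrow> v Pc + v Px | Pc \<Rightarrow> v Pb + v Px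
    | Px \<Rightarrow> v Pb + v Pc | Py \<Rightarrow> v Pc + v Px | Pz \<Rightarrow> v Pb + v Px)"
    and "amult (lvec {Pb, Px, Pz}) v = (\<lambda>r. case r of
      Pa \<Rightarrow> v Pc + v Py | Pb \<Rightarrow> v Pa + v Pc | Pc \<Rightarrow> v Pa + v Py
    | Px \<Rightarrow> v Pc + v Py | Py \<Rightarrow> v Pa + v Pc | Pz \<Rightarrow> v Pa + v Py)"
    and "amult (lvec {Pc, Px, Py}) v = (\<lambda>r. case r of
      Pa \<Rightarrow> v Pb + v Pz | Pb \<Rightarrow> v Pa + v Pz | Pc \<Rightarrow> v Pa + v Pb
    | Px \<Rightarrow> v Pb + v Pz | Py \<Rightarrow> v Pa + v Pz | Pz \<Rightarrow> v Pa + v Pb)"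
  by (simp_all add: fun_eq_iff all_pt lvec_def algebra_simps char2_simps[OF assms])

lemma ad_line_derivation:
  fixes u w :: "'r::comm_ring_1 alg"
  assumes "(2::'r) = 0" "l \<in> lines"
  shows "amult (lvec l) (amult u w) = amult (amult (lvec l) u) w + amult u (amult (lvec l) w)"
  using assms(2) unfolding lines_def
  by (elim insertE emptyE)
    (simp_all add: ad_line_simps[OF assms(1)] fun_eq_iff all_pt algebra_simps
      char2_simps[OF assms(1)])

(* The space J: in characteristic 2 it is spanned by b + c + y + z, a + c + x + z and
   a + b + x + y, the products of a line with the points off it. *)
definition square_zero_space :: "'r::comm_ring_1 alg set" where
  "square_zero_space = {v. v Px = v Pa \<and> v Py = v Pb \<and> v Pz = v Pc \<and> v Pa = v Pb + v Pc}"

lemma ad_line_in_square_zero_space: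
  fixes v :: "'r::comm_ring_1 alg"
  assumes "(2::'r) = 0" "l \<in> lines"
  shows "amult (lvec l) v \<in> square_zero_space"
  using assms(2) unfolding lines_def
  by (elim insertE emptyE)
    (simp_all add: ad_line_simps[OF assms(1)] square_zero_space_def algebra_simps
      char2_simps[OF assms(1)])

lemma ad_line_fixes_square_zero_space:
  fixes v :: "'r::comm_ring_1 alg"
  assumes "(2::'r) = 0" "l \<in> lines" "v \<in> square_zero_space"
  shows "amult (lvec l) v = v"
  using assms(2,3) unfolding lines_def
  by (elim insertE emptyE)
    (simp_all add: ad_line_simps[OF assms(1)] square_zero_space_def fun_eq_iff all_pt algebra_simps
      char2_simps[OF assms(1)])

lemma square_zero_space_mult:
  fixes u w :: "'r::comm_ring_1 alg"
  assumes "(2::'r) = 0" "u \<in> square_zero_space" "w \<in> square_zero_space"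
  shows "amult u w = 0"
  using assms(2,3)
  by (auto simp: square_zero_space_def fun_eq_iff all_pt algebra_simps char2_simps[OF assms(1)])

lemma eigsp_one_eq_square_zero_space:
  assumes "(2::'r::comm_ring_1) = 0" "l \<in> lines"
  shows "eigsp l (1::'r) = square_zero_space"
proof (intro set_eqI iffI)
  fix v :: "'r alg"
  show "v \<in> eigsp l 1 \<Longrightarrow> v \<in> square_zero_space"
    using ad_line_in_square_zero_space[OF assms, of v] by (simp add: eigsp_one)
  show "v \<in> square_zero_space \<Longrightarrow> v \<in> eigsp l 1"
    using ad_line_fixes_square_zero_space[OF assms] by (simp add: eigsp_one)
qed

lemma ad_line_idem:
  fixes v :: "'r::comm_ring_1 alg"
  assumes "(2::'r) = 0" "l \<in> lines"
  shows "amult (lvec l) (amult (lvec l) v) = amult (lvec l) v"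
  using ad_line_fixes_square_zero_space[OF assms ad_line_in_square_zero_space[OF assms]] .

lemma line_eigsp_decomposition:
  fixes v :: "'r::comm_ring_1 alg"
  assumes "(2::'r) = 0" "l \<in> lines"
  shows "\<exists>!w. w \<in> eigsp l 0 \<times> eigsp l 1 \<and> v = fst w + snd w"
  unfolding eigsp_zero eigsp_one
  by (rule idempotent_decomposition[of "amult (lvec l)", OF amult_add_right ad_line_idem[OF assms]])

lemma eigsp_zero_mult_zero:
  fixes u w :: "'r::comm_ring_1 alg"
  assumes "(2::'r) = 0" "l \<in> lines" "u \<in> eigsp l 0" "w \<in> eigsp l 0"
  shows "amult u w \<in> eigsp l 0"
  using assms(3,4) ad_line_derivation[OF assms(1,2)] by (simp add: eigsp_zero)

lemma eigsp_zero_mult_one: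
  fixes u w :: "'r::comm_ring_1 alg"
  assumes "(2::'r) = 0" "l \<in> lines" "u \<in> eigsp l 0" "w \<in> eigsp l 1"
  shows "amult u w \<in> eigsp l 1" and "amult w u \<in> eigsp l 1"
  using assms(3,4) ad_line_derivation[OF assms(1,2)] by (simp_all add: eigsp_zero eigsp_one)

lemma eigsp_one_mult_one:
  fixes u w :: "'r::comm_ring_1 alg"
  assumes "(2::'r) = 0" "l \<in> lines" "u \<in> eigsp l 1" "w \<in> eigsp l 1"
  shows "amult u w = 0"
  using assms(3,4) eigsp_one_eq_square_zero_space[OF assms(1,2)]
  by (simp add: square_zero_space_mult[OF assms(1)])

theorem theorem5p14:
  assumes char2: "(2::'r::comm_ring_1) = 0"
  shows "(\<forall>l\<in>lines.
            (\<forall>v::'r alg. \<exists>!w. w \<in> eigsp l 0 \<times> eigsp l 1 \<and> v = fst w + snd w)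
          \<and> (\<forall>u\<in>eigsp l (0::'r). \<forall>w\<in>eigsp l 0. amult u w \<in> eigsp l 0)
          \<and> (\<forall>u\<in>eigsp l (0::'r). \<forall>w\<in>eigsp l 1. amult u w \<in> eigsp l 1 \<and> amult w u \<in> eigsp l 1)
          \<and> (\<forall>u\<in>eigsp l (1::'r). \<forall>w\<in>eigsp l 1. amult u w = 0))
       \<and> (\<forall>l\<in>lines. \<forall>l'\<in>lines. eigsp l (1::'r) = eigsp l' 1)"
proof (intro conjI ballI allI)
  fix l and v :: "'r alg" assume "l \<in> lines"
  show "\<exists>!w. w \<in> eigsp l 0 \<times> eigsp l 1 \<and> v = fst w + snd w"
    by (rule line_eigsp_decomposition[OF char2 \<open>l \<in> lines\<close>])
next
  fix l and u w :: "'r alg" assume "l \<in> lines" "u \<in> eigsp l 0" "w \<in> eigsp l 0"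
  then show "amult u w \<in> eigsp l 0"
    by (rule eigsp_zero_mult_zero[OF char2])
next
  fix l and u w :: "'r alg" assume "l \<in> lines" "u \<in> eigsp l 0" "w \<in> eigsp l 1"
  then show "amult u w \<in> eigsp l 1"
    by (rule eigsp_zero_mult_one(1)[OF char2])
next
  fix l and u w :: "'r alg" assume "l \<in> lines" "u \<in> eigsp l 0" "w \<in> eigsp l 1"
  then show "amult w u \<in> eigsp l 1"
    by (rule eigsp_zero_mult_one(2)[OF char2])
next
  fix l and u w :: "'r alg" assume "l \<in> lines" "u \<in> eigsp l 1" "w \<in> eigsp l 1"
  then show "amult u w = 0"
    by (rule eigsp_one_mult_one[OF char2])
next
  fix l l' assume "l \<in> lines" "l' \<in> lines"
  then show "eigsp l (1::'r) = eigsp l' 1"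
    by (simp add: eigsp_one_eq_square_zero_space[OF char2])
qed

end
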